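(* Let $i\ge1$, $j\ge 1$ and $n\ge0$ be integers. If $2^{i-1}<d_j(n)\le 2^i$, then $d_j(n)=d_{i+1}(n)$. Furthermore, $2^{i-1}<d_{i+1}(n)\le 2^i$ if and only if $-2^{i-1}<(n\bmod 2^{i+1})-2^i<2^{i-1}$.
   Context: For $i\in\mathbb{N}$ and $n\in\mathbb{N}_0$, $d_i(n)=2^{i-1}-\left|(n\bmod 2^i)-2^{i-1}\right|$. *)

theory Defs
  imports Main
begin

definition d :: "nat \<Rightarrow> nat \<Rightarrow> int" where
  "d i n = 2 ^ (i - 1) - \<bar>(int n mod 2 ^ i) - 2 ^ (i - 1)\<bar>"

end

theory Submission
  imports Defs
begin

text \<open>\<open>d j n\<close> is the distance from \<open>n\<close> to the nearest multiple of \<open>2^j\<close>. A multiple of \<open>2^j\<close>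
  with \<open>j > i\<close> is also a multiple of \<open>2^(i+1)\<close>. So if \<open>n\<close> lies within \<open>2^i\<close> of such a
  multiple, that multiple is also its nearest multiple of \<open>2^(i+1)\<close>, and
  \<open>d j n = d (i+1) n\<close>. The hypothesis \<open>2^(i-1) < d j n\<close> only serves to force \<open>j > i\<close>.\<close>

definition dist_multiple :: "int \<Rightarrow> int \<Rightarrow> int" where
  "dist_multiple m x = min (x mod m) (m - x mod m)"

lemma d_eq_dist_multiple: "d j n = dist_multiple (2 ^ j) (int n)"
proof (cases j)
  case 0
  then show ?thesis by (simp add: d_def dist_multiple_def)
next
  case (Suc k)
  then have "(2::int) ^ j = 2 * 2 ^ k" by simp
  then show ?thesis
    using Suc by (simp add: d_def dist_multiple_def abs_if)
qed

lemma dist_multiple_dvd: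
  fixes p Q x :: int
  assumes "0 < p" "0 < Q" "p dvd Q" "2 * dist_multiple Q x \<le> p"
  shows "dist_multiple p x = dist_multiple Q x"
proof -
  define a where "a = x mod Q"
  have a: "0 \<le> a" "a < Q" using assms(2) by (simp_all add: a_def)
  have x_mod_p: "x mod p = a mod p"
    using assms(3) by (simp add: a_def mod_mod_cancel)
  show ?thesis
  proof (cases "a \<le> Q - a")
    case True
    with assms(4) have "2 * a \<le> p" by (simp add: dist_multiple_def a_def)
    then have "x mod p = a" using x_mod_p a assms(1) by simp
    then show ?thesis
      using True \<open>2 * a \<le> p\<close> by (simp add: dist_multiple_def a_def)
  next
    case False
    define r where "r = Q - a"
    with False assms(4) have r: "0 < r" "2 * r \<le> p"
      using a by (simp_all add: dist_multiple_def a_def)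
    obtain k where "Q = p * k" using assms(3) by blast
    then have "a = (p - r) + p * (k - 1)" by (simp add: r_def algebra_simps)
    then have "a mod p = (p - r) mod p" by simp
    also have "\<dots> = p - r" using r by (intro mod_pos_pos_trivial) simp_all
    finally have "x mod p = p - r" using x_mod_p by simp
    then show ?thesis
      using False r by (simp add: dist_multiple_def a_def r_def)
  qed
qed

lemma d_le_half_period: "d j n \<le> 2 ^ (j - 1)"
  by (simp add: d_def)

lemma d_eq_d_Suc_if_bounded:
  assumes "1 \<le> i" "2 ^ (i - 1) < d j n" "d j n \<le> 2 ^ i"
  shows "d j n = d (i + 1) n"
proof -
  have "(2::int) ^ (i - 1) < 2 ^ (j - 1)"
    using assms(2) d_le_half_period[of j n] by linarith
  then have "i + 1 \<le> j" using assms(1) by simp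
  then have "(2::int) ^ (i + 1) dvd 2 ^ j" by (rule le_imp_power_dvd)
  moreover have "2 * dist_multiple (2 ^ j) (int n) \<le> 2 ^ (i + 1)"
    using assms(3) by (simp add: d_eq_dist_multiple)
  ultimately show ?thesis
    using dist_multiple_dvd[of "2 ^ (i + 1)" "2 ^ j" "int n"]
    by (simp add: d_eq_dist_multiple)
qed

lemma d_Suc_bounds_iff:
  assumes "1 \<le> i"
  shows "(2 ^ (i - 1) < d (i + 1) n \<and> d (i + 1) n \<le> 2 ^ i) \<longleftrightarrow>
    \<bar>int n mod 2 ^ (i + 1) - 2 ^ i\<bar> < (2 ^ (i - 1) :: int)"
proof -
  have "(2::int) ^ i = 2 * 2 ^ (i - 1)"
    using assms by (cases i) simp_all
  then show ?thesis by (simp add: d_def)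
qed

theorem lemma14:
  fixes i j n :: nat
  assumes "i \<ge> 1" and "j \<ge> 1"
  shows "(2 ^ (i - 1) < d j n \<and> d j n \<le> 2 ^ i \<longrightarrow> d j n = d (i + 1) n)
     \<and> ((2 ^ (i - 1) < d (i + 1) n \<and> d (i + 1) n \<le> 2 ^ i) \<longleftrightarrow>
          (- (2 ^ (i - 1)) < (int n mod 2 ^ (i + 1)) - 2 ^ i \<and>
           (int n mod 2 ^ (i + 1)) - 2 ^ i < (2 ^ (i - 1) :: int)))"
  using d_eq_d_Suc_if_bounded[OF assms(1)] d_Suc_bounds_iff[OF assms(1), of n]
  by (auto simp: abs_less_iff)

end
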